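(* Let $n\ge 2$ and $m=n-1$, let $\lambda_1,\dots,\lambda_n>0$, and let $X_1,\dots,X_n$ be independent random variables with $X_i\sim\mathrm{Poisson}(\lambda_i)$. Let $\mathbf A\in\mathrm{Mat}_{m\times n}(\mathbb{N})$ (where $\mathbb{N}=\mathbb{Z}_{\ge 0}$), and define $(Y_1,\dots,Y_m)^T=\mathbf A(X_1,\dots,X_n)^T$ and $F_{\mathbf Y}(b_1,\dots,b_m)=\mathbb{P}(Y_1=b_1,\dots,Y_m=b_m)$, so that \[ F_{\mathbf Y}(b)=\sum_{\substack{k\in\mathbb{N}^n\\ \mathbf A k=b}}\frac{\lambda_1^{k_1}}{k_1!}\cdots\frac{\lambda_n^{k_n}}{k_n!}\,e^{-(\lambda_1+\dots+\lambda_n)} . \] Suppose $\mathbf A$ has rank $r=m=n-1$ and all of its elementary divisors $d_1,\dots,d_r$ equal $\pm1$. Then $F_{\mathbf Y}$ can be written as a sum over a single index: there exist an integer matrix $\mathbf M\in\mathrm{Mat}_{n\times m}(\mathbb{Z})$ and an integer vector $v\in\mathbb{Z}^n$ such that for every $b\in\mathbb{N}^m$, writing $k(j)=\mathbf M b+j v$, \[ F_{\mathbf Y}(b)=\sum_{\substack{j\in\mathbb{Z}\\ k(j)\in\mathbb{N}^n}}\frac{\lambda_1^{k_1(j)}}{k_1(j)!}\cdots\frac{\lambda_n^{k_n(j)}}{k_n(j)!}\,e^{-(\lambda_1+\dots+\lambda_n)} . \]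
   Context: Elementary divisors: every $\mathbf A\in\mathrm{Mat}_{m\times n}(\mathbb{Z})$ of rank $r$ has a Smith normal form, i.e. there are matrices $\mathbf P\in\mathrm{Mat}_{m\times m}(\mathbb{Z})$, $\mathbf Q\in\mathrm{Mat}_{n\times n}(\mathbb{Z})$ invertible over $\mathbb{Z}$ such that $\mathbf{PAQ}$ is the $m\times n$ matrix with diagonal entries $d_1,\dots,d_r,0,\dots,0$ and zeros elsewhere, with $d_i\ne0$ and $d_1\mid d_2\mid\cdots\mid d_r$; the $d_i$ are unique up to sign and are called the elementary divisors of $\mathbf A$. Equivalently $d_i=\pm\Delta_i/\Delta_{i-1}$ where $\Delta_i$ is the gcd of the $i\times i$ minors of $\mathbf A$ ($\Delta_0=1$). *)

theory Defs
  imports "HOL-Analysis.Analysis" "Jordan_Normal_Form.Matrix"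
begin

definition smith_normal_form :: "int mat \<Rightarrow> int mat \<Rightarrow> int mat \<Rightarrow> (nat \<Rightarrow> int) \<Rightarrow> nat \<Rightarrow> bool" where
  "smith_normal_form A P Q d r \<longleftrightarrow>
     (let m = dim_row A; n = dim_col A in
        P \<in> carrier_mat m m \<and> Q \<in> carrier_mat n n \<and>
        invertible_mat P \<and> invertible_mat Q \<and> r \<le> min m n \<and>
        P * A * Q = mat m n (\<lambda>(i, j). if i = j \<and> i < r then d i else 0) \<and>
        (\<forall>i<r. d i \<noteq> 0) \<and> (\<forall>i. Suc i < r \<longrightarrow> d i dvd d (Suc i)))"

text \<open>The Poisson weight of a vector k in N^n (entries assumed nonnegative).\<close>
definition poisson_weight :: "nat \<Rightarrow> (nat \<Rightarrow> real) \<Rightarrow> int vec \<Rightarrow> real" where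
  "poisson_weight n lam k =
     (\<Prod>i<n. lam i ^ nat (k $ i) / fact (nat (k $ i))) * exp (- (\<Sum>i<n. lam i))"

definition F_Y :: "int mat \<Rightarrow> (nat \<Rightarrow> real) \<Rightarrow> int vec \<Rightarrow> real" where
  "F_Y A lam b = infsum (poisson_weight (dim_col A) lam)
      {k. k \<in> carrier_vec (dim_col A) \<and> (\<forall>i<dim_col A. 0 \<le> k $ i) \<and> A *\<^sub>v k = b}"

end

theory Submission
  imports Defs
begin

text \<open>Write an integer vector as k = Q y. The Smith normal form P A Q = [diag d | 0] turns
  A k = b into d_i y_i = (P b)_i for i < m and leaves y_m free. As every d_i is a unit, the first
  m coordinates of y are integral and uniquely determined, so the integer solutions of A k = b form
  the line M b + j v with v = Q e_m, and F_Y is the Poisson sum reindexed along this line.\<close>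

lemma mult_mat_vec_smult:
  fixes A :: "'a :: comm_semiring_0 mat"
  assumes "A \<in> carrier_mat nr nc" "v \<in> carrier_vec nc"
  shows "A *\<^sub>v (k \<cdot>\<^sub>v v) = k \<cdot>\<^sub>v (A *\<^sub>v v)"
  using assms by (intro eq_vecI) auto

lemma invertible_mat_obtain_inverse:
  fixes A :: "'a :: semiring_1 mat"
  assumes "invertible_mat A" "A \<in> carrier_mat n n"
  obtains B where "B \<in> carrier_mat n n" "A * B = 1\<^sub>m n" "B * A = 1\<^sub>m n"
proof -
  from assms obtain B where AB: "A * B = 1\<^sub>m n" and BA: "B * A = 1\<^sub>m (dim_row B)"
    unfolding invertible_mat_def inverts_mat_def by auto
  have col: "dim_col B = n" using arg_cong[OF AB, of dim_col] by simp
  have row: "dim_row B = n" using arg_cong[OF BA, of dim_col] assms(2) by simp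
  show thesis
  proof (rule that)
    show "B \<in> carrier_mat n n" using row col by (rule carrier_matI)
    show "A * B = 1\<^sub>m n" by (fact AB)
    show "B * A = 1\<^sub>m n" using BA unfolding row .
  qed
qed

lemma invertible_mat_mult_vec_cancel:
  fixes A :: "'a :: semiring_1 mat"
  assumes "invertible_mat A" "A \<in> carrier_mat n n" "x \<in> carrier_vec n" "y \<in> carrier_vec n"
  shows "A *\<^sub>v x = A *\<^sub>v y \<longleftrightarrow> x = y"
proof
  assume "A *\<^sub>v x = A *\<^sub>v y"
  obtain B where B: "B \<in> carrier_mat n n" "B * A = 1\<^sub>m n"
    using invertible_mat_obtain_inverse[OF assms(1,2)] by blast
  have "z = B *\<^sub>v (A *\<^sub>v z)" if "z \<in> carrier_vec n" for z
    using B assms(2) that by (simp flip: assoc_mult_mat_vec)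
  then show "x = y" using assms(3,4) \<open>A *\<^sub>v x = A *\<^sub>v y\<close> by metis
qed simp

lemma rect_diag_mult_vec:
  fixes d :: "nat \<Rightarrow> 'a :: semiring_0"
  assumes "y \<in> carrier_vec nc" "r \<le> min nr nc"
  shows "mat nr nc (\<lambda>(i, j). if i = j \<and> i < r then d i else 0) *\<^sub>v y =
    vec nr (\<lambda>i. if i < r then d i * y $ i else 0)"
proof (rule eq_vecI)
  fix i assume "i < dim_vec (vec nr (\<lambda>i. if i < r then d i * y $ i else 0))"
  then have i: "i < nr" by simp
  have "(\<Sum>j<nc. (if i = j \<and> i < r then d i else 0) * y $ j) =
        (\<Sum>j<nc. if j = i then (if i < r then d i * y $ i else 0) else 0)"
    by (intro sum.cong) auto
  also have "\<dots> = (if i < r then d i * y $ i else 0)"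
    using assms(2) by auto
  finally show "(mat nr nc (\<lambda>(i, j). if i = j \<and> i < r then d i else 0) *\<^sub>v y) $ i =
      vec nr (\<lambda>i. if i < r then d i * y $ i else 0) $ i"
    using i assms(1) by (simp add: scalar_prod_def atLeast0LessThan)
qed simp

lemma smith_normal_form_mult_vec_eq_iff:
  assumes snf: "smith_normal_form A P Q d r" and A: "A \<in> carrier_mat m n"
    and y: "y \<in> carrier_vec n" and b: "b \<in> carrier_vec m"
  shows "A *\<^sub>v (Q *\<^sub>v y) = b \<longleftrightarrow> (\<forall>i<m. (if i < r then d i * y $ i else 0) = (P *\<^sub>v b) $ i)"
proof -
  have P: "P \<in> carrier_mat m m" and Q: "Q \<in> carrier_mat n n" and "invertible_mat P" and "r \<le> min m n"
    and PAQ: "P * A * Q = mat m n (\<lambda>(i, j). if i = j \<and> i < r then d i else 0)"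
    using snf A unfolding smith_normal_form_def Let_def by auto
  have "A *\<^sub>v (Q *\<^sub>v y) = b \<longleftrightarrow> P *\<^sub>v (A *\<^sub>v (Q *\<^sub>v y)) = P *\<^sub>v b"
    using invertible_mat_mult_vec_cancel[OF \<open>invertible_mat P\<close> P] A Q y b by simp
  also have "P *\<^sub>v (A *\<^sub>v (Q *\<^sub>v y)) = (P * A * Q) *\<^sub>v y"
    by (simp only: assoc_mult_mat_vec[OF mult_carrier_mat[OF P A] Q y]
        assoc_mult_mat_vec[OF P A mult_mat_vec_carrier[OF Q y]])
  also have "\<dots> = vec m (\<lambda>i. if i < r then d i * y $ i else 0)"
    unfolding PAQ using rect_diag_mult_vec[OF y \<open>r \<le> min m n\<close>] .
  finally show ?thesis using P b by (auto simp: vec_eq_iff)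
qed

lemma smith_unit_corank_one_mult_vec_eq_iff:
  assumes snf: "smith_normal_form A P Q d m" and A: "A \<in> carrier_mat m n" and n: "n = Suc m"
    and units: "\<forall>i<m. d i = 1 \<or> d i = -1"
    and y: "y \<in> carrier_vec n" and b: "b \<in> carrier_vec m"
  shows "A *\<^sub>v (Q *\<^sub>v y) = b \<longleftrightarrow> y = vec n (\<lambda>i. if i < m then d i * (P *\<^sub>v b) $ i else y $ m)"
proof -
  have "A *\<^sub>v (Q *\<^sub>v y) = b \<longleftrightarrow> (\<forall>i<m. d i * y $ i = (P *\<^sub>v b) $ i)"
    using smith_normal_form_mult_vec_eq_iff[OF snf A y b] by simp
  also have "\<dots> \<longleftrightarrow> (\<forall>i<m. y $ i = d i * (P *\<^sub>v b) $ i)"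
    using units by (metis mult_1 mult_minus1 minus_minus)
  also have "\<dots> \<longleftrightarrow> y = vec n (\<lambda>i. if i < m then d i * (P *\<^sub>v b) $ i else y $ m)"
    using y n by (auto simp: vec_eq_iff less_Suc_eq)
  finally show ?thesis .
qed

lemma smith_unit_corank_one_solution_set:
  assumes snf: "smith_normal_form A P Q d m" and A: "A \<in> carrier_mat m n" and n: "n = Suc m"
    and units: "\<forall>i<m. d i = 1 \<or> d i = -1" and b: "b \<in> carrier_vec m"
  shows "{k \<in> carrier_vec n. A *\<^sub>v k = b} =
    range (\<lambda>j. Q *\<^sub>v vec n (\<lambda>i. if i < m then d i * (P *\<^sub>v b) $ i else j))"
    (is "_ = range (\<lambda>j. Q *\<^sub>v ?z j)")
proof (intro equalityI subsetI)
  have Q: "Q \<in> carrier_mat n n" and "invertible_mat Q"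
    using snf A unfolding smith_normal_form_def Let_def by auto
  note solves_iff = smith_unit_corank_one_mult_vec_eq_iff[OF snf A n units _ b]
  {
    fix k assume "k \<in> {k \<in> carrier_vec n. A *\<^sub>v k = b}"
    then have k: "k \<in> carrier_vec n" and "A *\<^sub>v k = b" by auto
    obtain Qi where Qi: "Qi \<in> carrier_mat n n" "Q * Qi = 1\<^sub>m n"
      using invertible_mat_obtain_inverse[OF \<open>invertible_mat Q\<close> Q] by blast
    have QQi: "Q *\<^sub>v (Qi *\<^sub>v k) = k"
      using Q Qi k by (simp flip: assoc_mult_mat_vec)
    then have "A *\<^sub>v (Q *\<^sub>v (Qi *\<^sub>v k)) = b" using \<open>A *\<^sub>v k = b\<close> by simp
    then have "Qi *\<^sub>v k = ?z ((Qi *\<^sub>v k) $ m)"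
      using solves_iff[OF mult_mat_vec_carrier[OF Qi(1) k]] by blast
    then have "Q *\<^sub>v (Qi *\<^sub>v k) = Q *\<^sub>v ?z ((Qi *\<^sub>v k) $ m)" by (rule arg_cong)
    then show "k \<in> range (\<lambda>j. Q *\<^sub>v ?z j)" unfolding QQi by (rule range_eqI)
  next
    fix k assume "k \<in> range (\<lambda>j. Q *\<^sub>v ?z j)"
    then obtain j where k: "k = Q *\<^sub>v ?z j" by auto
    have "A *\<^sub>v (Q *\<^sub>v ?z j) = b"
      by (rule solves_iff[of "?z j", THEN iffD2]) (auto simp: n)
    then show "k \<in> {k \<in> carrier_vec n. A *\<^sub>v k = b}" using k Q by simp
  }
qed

lemma smith_unit_corank_one_solutions:
  assumes snf: "smith_normal_form A P Q d m" and A: "A \<in> carrier_mat m n" and n: "n = Suc m"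
    and units: "\<forall>i<m. d i = 1 \<or> d i = -1"
  obtains M v where "M \<in> carrier_mat n m" "v \<in> carrier_vec n" "v \<noteq> 0\<^sub>v n"
    "\<And>b. b \<in> carrier_vec m \<Longrightarrow> {k \<in> carrier_vec n. A *\<^sub>v k = b} = range (\<lambda>j. M *\<^sub>v b + j \<cdot>\<^sub>v v)"
proof
  have P: "P \<in> carrier_mat m m" and Q: "Q \<in> carrier_mat n n" and "invertible_mat Q"
    using snf A unfolding smith_normal_form_def Let_def by auto
  define D' where "D' = mat n m (\<lambda>(i, j). if i = j \<and> i < m then d i else 0)"
  have D': "D' \<in> carrier_mat n m" by (simp add: D'_def)
  then have D'P: "D' * P \<in> carrier_mat n m" using P by simp
  show "Q * (D' * P) \<in> carrier_mat n m" using Q D'P by simp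
  show "Q *\<^sub>v unit_vec n m \<in> carrier_vec n" using Q by simp
  have "Q *\<^sub>v 0\<^sub>v n = 0\<^sub>v n" using Q by auto
  then show "Q *\<^sub>v unit_vec n m \<noteq> 0\<^sub>v n"
    using invertible_mat_mult_vec_cancel[OF \<open>invertible_mat Q\<close> Q, of "unit_vec n m" "0\<^sub>v n"] n
    by simp
  fix b :: "int vec" assume b: "b \<in> carrier_vec m"
  have "vec n (\<lambda>i. if i < m then d i * (P *\<^sub>v b) $ i else j) = D' *\<^sub>v (P *\<^sub>v b) + j \<cdot>\<^sub>v unit_vec n m"
    for j using rect_diag_mult_vec[of "P *\<^sub>v b" m m n d] P b n by (auto simp: D'_def)
  then have "Q *\<^sub>v vec n (\<lambda>i. if i < m then d i * (P *\<^sub>v b) $ i else j) =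
      Q * (D' * P) *\<^sub>v b + j \<cdot>\<^sub>v (Q *\<^sub>v unit_vec n m)" for j
    using Q D' P b
    by (simp add: assoc_mult_mat_vec[OF Q D'P b] assoc_mult_mat_vec[OF D' P b] mult_add_distrib_mat_vec
        mult_mat_vec_smult)
  then show "{k \<in> carrier_vec n. A *\<^sub>v k = b} =
      range (\<lambda>j. Q * (D' * P) *\<^sub>v b + j \<cdot>\<^sub>v (Q *\<^sub>v unit_vec n m))"
    using smith_unit_corank_one_solution_set[OF snf A n units b] by simp
qed

lemma inj_affine_line:
  fixes v :: "'a :: idom vec"
  assumes "v \<in> carrier_vec n" "v \<noteq> 0\<^sub>v n"
  shows "inj (\<lambda>j. c + j \<cdot>\<^sub>v v)"
proof
  fix j1 j2 assume eq: "c + j1 \<cdot>\<^sub>v v = c + j2 \<cdot>\<^sub>v v"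
  obtain i where i: "i < n" "v $ i \<noteq> 0"
    using assms by (auto simp: vec_eq_iff)
  have "j1 * v $ i = j2 * v $ i"
    using arg_cong[OF eq, of "\<lambda>x. x $ i"] i assms(1) by simp
  then show "j1 = j2" using i by simp
qed

lemma F_Y_reindex:
  assumes A: "A \<in> carrier_mat m n" and "inj line"
    and solutions: "{k \<in> carrier_vec n. A *\<^sub>v k = b} = range line"
  shows "F_Y A lam b = infsum (poisson_weight n lam \<circ> line) {j. \<forall>i<n. 0 \<le> line j $ i}"
proof -
  have "{k. k \<in> carrier_vec n \<and> (\<forall>i<n. 0 \<le> k $ i) \<and> A *\<^sub>v k = b} =
        {k \<in> range line. \<forall>i<n. 0 \<le> k $ i}"
    unfolding solutions[symmetric] by blast
  also have "\<dots> = line ` {j. \<forall>i<n. 0 \<le> line j $ i}" by blast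
  finally show ?thesis
    unfolding F_Y_def using A infsum_reindex[OF inj_on_subset[OF \<open>inj line\<close> subset_UNIV]]
    by simp
qed

theorem mainTheorem1:
  fixes n m :: nat and lam :: "nat \<Rightarrow> real" and A :: "int mat"
  assumes "n \<ge> 2" and "m = n - 1"
    and "\<forall>i<n. lam i > 0"
    and "A \<in> carrier_mat m n" and "\<forall>i<m. \<forall>j<n. 0 \<le> A $$ (i, j)"
    and "\<exists>P Q d. smith_normal_form A P Q d m \<and> (\<forall>i<m. d i = 1 \<or> d i = -1)"
  shows "\<exists>M v. M \<in> carrier_mat n m \<and> v \<in> carrier_vec n \<and>
    (\<forall>b. b \<in> carrier_vec m \<and> (\<forall>i<m. 0 \<le> b $ i) \<longrightarrow>
       F_Y A lam b =
         infsum (\<lambda>j::int. poisson_weight n lam (M *\<^sub>v b + of_int j \<cdot>\<^sub>v v))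
           {j. \<forall>i<n. 0 \<le> (M *\<^sub>v b + of_int j \<cdot>\<^sub>v v) $ i})"
proof -
  obtain P Q d where snf: "smith_normal_form A P Q d m" and units: "\<forall>i<m. d i = 1 \<or> d i = -1"
    using assms(6) by blast
  have "n = Suc m" using assms(1,2) by simp
  obtain M v where M: "M \<in> carrier_mat n m" and v: "v \<in> carrier_vec n" "v \<noteq> 0\<^sub>v n"
    and solutions: "\<And>b. b \<in> carrier_vec m \<Longrightarrow>
      {k \<in> carrier_vec n. A *\<^sub>v k = b} = range (\<lambda>j. M *\<^sub>v b + j \<cdot>\<^sub>v v)"
    using smith_unit_corank_one_solutions[OF snf assms(4) \<open>n = Suc m\<close> units] by blast
  have "F_Y A lam b = infsum (\<lambda>j::int. poisson_weight n lam (M *\<^sub>v b + of_int j \<cdot>\<^sub>v v))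
          {j. \<forall>i<n. 0 \<le> (M *\<^sub>v b + of_int j \<cdot>\<^sub>v v) $ i}" if "b \<in> carrier_vec m" for b
    using F_Y_reindex[OF assms(4) inj_affine_line[OF v] solutions[OF that]] by (simp add: o_def)
  then show ?thesis using M v(1) by blast
qed

end
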